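(* Let $T$ be the rank-one cutting and stacking transformation with $C_0=I=(0,1)$, $r_n=n+2$, $h_n=5^{n(n+1)/2}$ for all $n\ge0$, and spacers chosen so that for each $n$ $$H_n=\{0\}\cup\{j\cdot5^{n(n+1)/2}:1\le j\le\lceil\sqrt n\rceil\}\cup\{5^{n(n+1)/2+i}:\lceil\sqrt n\rceil\le i\le n\}.$$ Then $T$ is of zero type: $\mu(A\cap T^kA)\to0$ as $k\to\infty$ for every measurable $A$ of finite measure.
   Context: Cutting and stacking: $C_0$ is a single level $I$; column $C_n$ of height $h_n$ is cut into $r_n$ equal-width subcolumns, $s_{n,k}\ge0$ spacers are placed above the $k$-th subcolumn ($0\le k\le r_n-1$), and subcolumns are stacked left to right to form $C_{n+1}$; $T$ maps each level to the one above. With $h_{n,k}=h_n+s_{n,k}$, $H_n=\{0\}\cup\{\sum_{k=0}^{i}h_{n,k}:0\le i<r_n-1\}$; so the prescriptions above determine $s_{n,k}$ for $k<r_n-1$, and $s_{n,r_n-1}$ is determined by $h_{n+1}=\sum_{k}h_{n,k}=5^{(n+1)(n+2)/2}$ (in particular $s_{n,r_n-1}>0$). $\mu$ is Lebesgue measure on the resulting space (infinite measure). *)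

theory Defs
  imports "HOL-Analysis.Analysis"
begin

text \<open>Generic rank-one cutting and stacking, parameterised by the cut numbers
  r n (column C_n is cut into r n subcolumns) and the spacer numbers s n k
  (number of spacers placed above the k-th subcolumn of C_n).
  C_0 is the single level [0,1); new spacers of stage n are placed in R to the
  right of all material used so far.  Levels are half-open intervals.\<close>

primrec cs_height :: "(nat \<Rightarrow> nat) \<Rightarrow> (nat \<Rightarrow> nat \<Rightarrow> nat) \<Rightarrow> nat \<Rightarrow> nat" where
  "cs_height r s 0 = 1"
| "cs_height r s (Suc n) = (\<Sum>k<r n. cs_height r s n + s n k)"

definition cs_hk :: "(nat \<Rightarrow> nat) \<Rightarrow> (nat \<Rightarrow> nat \<Rightarrow> nat) \<Rightarrow> nat \<Rightarrow> nat \<Rightarrow> nat" where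
  "cs_hk r s n k = cs_height r s n + s n k"

definition cs_H :: "(nat \<Rightarrow> nat) \<Rightarrow> (nat \<Rightarrow> nat \<Rightarrow> nat) \<Rightarrow> nat \<Rightarrow> nat set" where
  "cs_H r s n = {0} \<union> {(\<Sum>k\<le>i. cs_hk r s n k) | i. i < r n - 1}"

definition cs_width :: "(nat \<Rightarrow> nat) \<Rightarrow> nat \<Rightarrow> real" where
  "cs_width r n = 1 / (\<Prod>i<n. real (r i))"

text \<open>total length of R used by the columns C_0, ..., C_n\<close>
primrec cs_len :: "(nat \<Rightarrow> nat) \<Rightarrow> (nat \<Rightarrow> nat \<Rightarrow> nat) \<Rightarrow> nat \<Rightarrow> real" where
  "cs_len r s 0 = 1"
| "cs_len r s (Suc n) = cs_len r s n + real (\<Sum>k<r n. s n k) * cs_width r (Suc n)"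

text \<open>level index in C_{n+1} at which the k-th subcolumn of C_n starts\<close>
definition cs_off :: "(nat \<Rightarrow> nat) \<Rightarrow> (nat \<Rightarrow> nat \<Rightarrow> nat) \<Rightarrow> nat \<Rightarrow> nat \<Rightarrow> nat" where
  "cs_off r s n k = (\<Sum>k'<k. cs_hk r s n k')"

text \<open>left endpoint of the j-th level (counted from the bottom, j < h_n) of C_n\<close>
primrec cs_lev :: "(nat \<Rightarrow> nat) \<Rightarrow> (nat \<Rightarrow> nat \<Rightarrow> nat) \<Rightarrow> nat \<Rightarrow> nat \<Rightarrow> real" where
  "cs_lev r s 0 = (\<lambda>j. 0)"
| "cs_lev r s (Suc n) = (\<lambda>j.
     let k = (GREATEST k. k < r n \<and> cs_off r s n k \<le> j);
         t = j - cs_off r s n k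
     in if t < cs_height r s n
        then cs_lev r s n t + real k * cs_width r (Suc n)
        else cs_len r s n + real ((\<Sum>k'<k. s n k') + (t - cs_height r s n)) * cs_width r (Suc n))"

definition cs_level :: "(nat \<Rightarrow> nat) \<Rightarrow> (nat \<Rightarrow> nat \<Rightarrow> nat) \<Rightarrow> nat \<Rightarrow> nat \<Rightarrow> real set" where
  "cs_level r s n j = {cs_lev r s n j ..< cs_lev r s n j + cs_width r n}"

definition cs_space :: "(nat \<Rightarrow> nat) \<Rightarrow> (nat \<Rightarrow> nat \<Rightarrow> nat) \<Rightarrow> real set" where
  "cs_space r s = (\<Union>n. \<Union>j\<in>{..<cs_height r s n}. cs_level r s n j)"

text \<open>T maps each level (not the top one) of C_n to the level above by translation;
  on the remaining null set (points lying in the top level of every column) T is the identity.\<close>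
definition cs_T :: "(nat \<Rightarrow> nat) \<Rightarrow> (nat \<Rightarrow> nat \<Rightarrow> nat) \<Rightarrow> real \<Rightarrow> real" where
  "cs_T r s x =
    (if \<exists>n j. Suc j < cs_height r s n \<and> x \<in> cs_level r s n j
     then (SOME y. \<exists>n j. Suc j < cs_height r s n \<and> x \<in> cs_level r s n j \<and>
                          y = x - cs_lev r s n j + cs_lev r s n (Suc j))
     else x)"

definition zero_type :: "real set \<Rightarrow> (real \<Rightarrow> real) \<Rightarrow> bool" where
  "zero_type X T \<longleftrightarrow>
     (\<forall>A. A \<in> sets lebesgue \<and> A \<subseteq> X \<and> emeasure lebesgue A < \<infinity> \<longrightarrow>
        (\<lambda>k. measure lebesgue (A \<inter> (T ^^ k) ` A)) \<longlonglongrightarrow> 0)"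

end

theory Submission
  imports Defs "HOL-Real_Asymp.Real_Asymp"
begin

text \<open>Every set of finite measure in X lies, up to a set of small measure, in some column C_n,
  and T^k does not increase measure, so it suffices that \<mu>(C_n \<inter> T^k C_n) \<rightarrow> 0 for each n.
  If x and T^k x both lie in C_n and k \<ge> h_(n+1), follow their positions through the later columns:
  if C_(N+1) is the first column in which these positions differ by exactly k, then
  k = off_N(b) - off_N(a) + e with copies a < b of C_N in C_(N+1), where e, the difference of the
  positions in C_N, is bounded by the part of C_N below its last block of spacers.  So x lies in
  the part of C_n inside the a-th copy of C_N, of measure at most \<mu>(C_n)/r_N.  For the given
  heights only two N are possible for each k, and the shape of H_N allows at most \<lceil>\<surd>N\<rceil> + 2
  of the N + 2 copies as a, whence \<mu>(C_n \<inter> T^k C_n) \<le> 2 \<mu>(C_n) (\<lceil>\<surd>N\<rceil> + 2)/(N + 2) \<rightarrow> 0.\<close>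

lemma sum_lessThan_add_le: "(a::nat) < b \<Longrightarrow> (\<Sum>k<a. f k) + (f a::nat) \<le> (\<Sum>k<b. f k)"
  using sum_mono2[of "{..<b}" "{..<Suc a}" f] by simp

lemma emeasure_lebesgue_translation:
  "emeasure lebesgue ((+) c ` S) = emeasure lebesgue (S :: 'a::euclidean_space set)"
proof -
  have "(+) c ` S = (\<lambda>x. 1 *\<^sub>R x + c) ` S" by (auto simp: add.commute image_iff)
  then show ?thesis using emeasure_lebesgue_affine[of 1 c S] by simp
qed

section \<open>Heights, offsets and levels\<close>

declare cs_height.simps(2)[simp del]

locale rank_one =
  fixes r :: "nat \<Rightarrow> nat" and s :: "nat \<Rightarrow> nat \<Rightarrow> nat"
  assumes cuts_pos: "\<And>n. 0 < r n"
begin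

abbreviation "h \<equiv> cs_height r s"
abbreviation "hk \<equiv> cs_hk r s"
abbreviation "off \<equiv> cs_off r s"
abbreviation "w \<equiv> cs_width r"
abbreviation "lv \<equiv> cs_level r s"
abbreviation "T \<equiv> cs_T r s"
abbreviation "X \<equiv> cs_space r s"

lemma off_0 [simp]: "off n 0 = 0"
  by (simp add: cs_off_def)

lemma off_Suc: "off n (Suc k) = off n k + hk n k"
  by (simp add: cs_off_def)

lemma off_cuts: "off n (r n) = h (Suc n)"
  by (simp add: cs_off_def cs_hk_def cs_height.simps(2))

lemma height_Suc: "h (Suc n) = r n * h n + (\<Sum>k<r n. s n k)"
  by (simp add: sum.distrib cs_height.simps(2))

lemma height_le_hk: "h n \<le> hk n a"
  by (simp add: cs_hk_def)

lemma height_pos: "0 < h n"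
proof (induction n)
  case (Suc n)
  have "h n + s n 0 \<le> (\<Sum>k<r n. h n + s n k)"
    using cuts_pos[of n] by (intro member_le_sum) auto
  with Suc show ?case by (simp add: cs_height.simps(2))
qed simp

lemma off_add_hk_le: "a < b \<Longrightarrow> off n a + hk n a \<le> off n b"
proof (induction b)
  case (Suc b)
  then show ?case using height_le_hk[of n b] by (cases "a = b") (auto simp: off_Suc)
qed simp

lemma off_add_height_le: "a < b \<Longrightarrow> off n a + h n \<le> off n b"
  using off_add_hk_le[of a b n] height_le_hk[of n a] by simp

lemma off_strict_mono: "a < b \<Longrightarrow> off n a < off n b"
  using off_add_height_le[of a b n] height_pos[of n] by simp

lemma off_eq_iff: "off n a = off n b \<longleftrightarrow> a = b"
  using off_strict_mono[of a b n] off_strict_mono[of b a n] by (cases a b rule: linorder_cases) auto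

lemma off_add_hk_le_height: "a < r n \<Longrightarrow> off n a + hk n a \<le> h (Suc n)"
  using off_add_hk_le[of a "r n" n] off_cuts[of n] by (cases "Suc a = r n") (auto simp: off_Suc)

lemma off_add_height_le_height: "a < r n \<Longrightarrow> off n a + h n \<le> h (Suc n)"
  using off_add_hk_le_height[of a n] height_le_hk[of n a] by simp

lemma height_mono_Suc: "h n \<le> h (Suc n)"
  using off_add_height_le_height[of 0 n] cuts_pos[of n] by simp

lemma off_last_add_height_add_spacers: "off n (r n - 1) + h n + s n (r n - 1) = h (Suc n)"
  using off_cuts[of n] off_Suc[of n "r n - 1"] cuts_pos[of n] by (simp add: cs_hk_def)

lemma off_add_height_add_last_spacers: "a < r n \<Longrightarrow> off n a + h n + s n (r n - 1) \<le> h (Suc n)"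
proof -
  assume "a < r n"
  then have "a \<le> r n - 1" by simp
  then have "off n a \<le> off n (r n - 1)"
    using off_strict_mono[of a "r n - 1" n] by (cases "a = r n - 1") simp_all
  then show ?thesis using off_last_add_height_add_spacers[of n] by simp
qed

lemma Greatest_off_le:
  assumes "a < r n" "t < hk n a"
  shows "(GREATEST k. k < r n \<and> off n k \<le> off n a + t) = a"
proof (rule Greatest_equality)
  show "a < r n \<and> off n a \<le> off n a + t" using assms by simp
  fix b assume b: "b < r n \<and> off n b \<le> off n a + t"
  show "b \<le> a"
  proof (rule ccontr)
    assume "\<not> b \<le> a"
    then have "off n a + hk n a \<le> off n b" by (intro off_add_hk_le) simp
    with b assms show False by simp
  qed
qed

lemma level_index_Suc_cases:
  assumes "j < h (Suc n)"
  obtains a t where "a < r n" "t < hk n a" "j = off n a + t"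
proof -
  define a where "a = (GREATEST k. k < r n \<and> off n k \<le> j)"
  have a: "a < r n \<and> off n a \<le> j"
    unfolding a_def
    by (rule GreatestI_ex_nat[where b = "r n"]) (use cuts_pos[of n] in \<open>auto intro!: exI[of _ 0]\<close>)
  have "j < off n (Suc a)"
  proof (cases "Suc a = r n")
    case True then show ?thesis using assms off_cuts by simp
  next
    case False
    then have "Suc a < r n" using a by simp
    moreover have "\<not> (Suc a < r n \<and> off n (Suc a) \<le> j)"
    proof
      assume "Suc a < r n \<and> off n (Suc a) \<le> j"
      then have "Suc a \<le> a" unfolding a_def by (intro Greatest_le_nat[where b = "r n"]) auto
      then show False by simp
    qed
    ultimately show ?thesis by simp
  qed
  then show thesis using a that[of a "j - off n a"] by (simp add: off_Suc)
qed

text \<open>The left endpoint of every level of C_n is an integer multiple of its width; this is the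
  multiplier, defined by the same recursion as cs_lev.\<close>
primrec slot :: "nat \<Rightarrow> nat \<Rightarrow> nat" where
  "slot 0 = (\<lambda>j. 0)"
| "slot (Suc n) = (\<lambda>j.
     let k = (GREATEST k. k < r n \<and> off n k \<le> j);
         t = j - off n k
     in if t < h n then slot n t * r n + k
        else h n * r n + ((\<Sum>k'<k. s n k') + (t - h n)))"

lemma slot_Suc_material:
  "a < r n \<Longrightarrow> t < h n \<Longrightarrow> slot (Suc n) (off n a + t) = slot n t * r n + a"
  using Greatest_off_le[of a n t] height_le_hk[of n a] by (simp add: Let_def)

lemma slot_Suc_spacer: "a < r n \<Longrightarrow> h n \<le> t \<Longrightarrow> t < hk n a \<Longrightarrow>
   slot (Suc n) (off n a + t) = h n * r n + ((\<Sum>k'<a. s n k') + (t - h n))"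
  using Greatest_off_le[of a n t] by (simp add: Let_def)

declare slot.simps(2)[simp del]

lemma width_Suc: "w (Suc n) = w n / r n"
  by (simp add: cs_width_def)

lemma width_eq_Suc: "w n = real (r n) * w (Suc n)"
  using cuts_pos[of n] by (simp add: width_Suc)

lemma width_pos: "0 < w n"
  using cuts_pos by (simp add: cs_width_def prod_pos)

lemma cs_len_eq: "cs_len r s n = real (h n) * w n"
proof (induction n)
  case 0 then show ?case by (simp add: cs_width_def)
next
  case (Suc n)
  then show ?case by (simp add: height_Suc width_eq_Suc[of n] algebra_simps)
qed

lemma cs_lev_eq: "cs_lev r s n j = real (slot n j) * w n"
proof (induction n arbitrary: j)
  case (Suc n)
  then show ?case
    by (simp add: Let_def cs_len_eq width_eq_Suc[of n] algebra_simps slot.simps(2))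
qed simp

lemma slot_Suc_material_less:
  assumes "a < r n" "slot n t < h n"
  shows "slot n t * r n + a < h n * r n"
proof -
  have "slot n t * r n + a < (slot n t + 1) * r n" using assms by simp
  also have "\<dots> \<le> h n * r n" using assms by (intro mult_right_mono) auto
  finally show ?thesis .
qed

lemma spacer_slot_less:
  assumes "a < b" "h n \<le> t" "t < hk n a"
  shows "(\<Sum>k<a. s n k) + (t - h n) < (\<Sum>k<b. s n k)"
proof -
  have "(\<Sum>k<a. s n k) + (t - h n) < (\<Sum>k<a. s n k) + s n a" using assms by (simp add: cs_hk_def)
  also have "\<dots> \<le> (\<Sum>k<b. s n k)" using sum_lessThan_add_le[OF assms(1)] .
  finally show ?thesis .
qed

lemma slot_less_height: "j < h n \<Longrightarrow> slot n j < h n"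
proof (induction n arbitrary: j)
  case (Suc n)
  obtain a t where at: "a < r n" "t < hk n a" "j = off n a + t"
    using level_index_Suc_cases[OF Suc.prems] .
  show ?case
  proof (cases "t < h n")
    case True
    then show ?thesis
      using at slot_Suc_material_less[OF at(1) Suc.IH[OF True]]
      by (simp add: slot_Suc_material height_Suc mult.commute)
  next
    case False
    then show ?thesis
      using at spacer_slot_less[of a "r n" n t] by (simp add: slot_Suc_spacer height_Suc mult.commute)
  qed
qed simp

lemma slot_inj: "j1 < h n \<Longrightarrow> j2 < h n \<Longrightarrow> slot n j1 = slot n j2 \<Longrightarrow> j1 = j2"
proof (induction n arbitrary: j1 j2)
  case (Suc n)
  obtain a1 t1 where at1: "a1 < r n" "t1 < hk n a1" "j1 = off n a1 + t1"
    using level_index_Suc_cases[OF Suc.prems(1)] .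
  obtain a2 t2 where at2: "a2 < r n" "t2 < hk n a2" "j2 = off n a2 + t2"
    using level_index_Suc_cases[OF Suc.prems(2)] .
  note eq = Suc.prems(3)[unfolded at1(3) at2(3)]
  show ?case
  proof (cases "t1 < h n"; cases "t2 < h n")
    assume t1: "t1 < h n" and t2: "t2 < h n"
    have eq': "slot n t1 * r n + a1 = slot n t2 * r n + a2"
      using eq at1 at2 t1 t2 by (simp add: slot_Suc_material)
    then have "(slot n t1 * r n + a1) mod r n = (slot n t2 * r n + a2) mod r n" by simp
    then have "a1 = a2" using at1 at2 by simp
    with eq' have "slot n t1 = slot n t2" using cuts_pos[of n] by simp
    then have "t1 = t2" using Suc.IH t1 t2 by blast
    with \<open>a1 = a2\<close> at1 at2 show ?thesis by simp
  next
    assume t1: "t1 < h n" and t2: "\<not> t2 < h n"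
    show ?thesis using eq at1 at2 t1 t2 slot_Suc_material_less[OF at1(1) slot_less_height[OF t1]]
      by (simp add: slot_Suc_material slot_Suc_spacer)
  next
    assume t1: "\<not> t1 < h n" and t2: "t2 < h n"
    show ?thesis using eq at1 at2 t1 t2 slot_Suc_material_less[OF at2(1) slot_less_height[OF t2]]
      by (simp add: slot_Suc_material slot_Suc_spacer)
  next
    assume t1: "\<not> t1 < h n" and t2: "\<not> t2 < h n"
    have eq': "(\<Sum>k<a1. s n k) + (t1 - h n) = (\<Sum>k<a2. s n k) + (t2 - h n)"
      using eq at1 at2 t1 t2 by (simp add: slot_Suc_spacer)
    have "a1 = a2"
      using spacer_slot_less[of a1 a2 n t1] spacer_slot_less[of a2 a1 n t2] eq' at1 at2 t1 t2
      by (cases a1 a2 rule: linorder_cases) auto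
    then show ?thesis using eq' at1 at2 t1 t2 by simp
  qed
qed simp

abbreviation "L n j \<equiv> real (slot n j) * w n"

lemma level_eq: "lv n j = {L n j ..< L n j + w n}"
  by (simp add: cs_level_def cs_lev_eq)

lemma level_disjoint: "j1 < h n \<Longrightarrow> j2 < h n \<Longrightarrow> j1 \<noteq> j2 \<Longrightarrow> lv n j1 \<inter> lv n j2 = {}"
proof -
  assume j: "j1 < h n" "j2 < h n" "j1 \<noteq> j2"
  have sep: "L n i1 + w n \<le> L n i2" if "slot n i1 < slot n i2" for i1 i2
  proof -
    have "real (slot n i1) + 1 \<le> real (slot n i2)" using that by linarith
    then show ?thesis using width_pos[of n] by (metis distrib_right mult_1 mult_right_mono less_imp_le)
  qed
  have "slot n j1 \<noteq> slot n j2" using j slot_inj by blast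
  then show ?thesis using sep[of j1 j2] sep[of j2 j1] by (cases "slot n j1 < slot n j2") (auto simp: level_eq)
qed

lemma L_Suc_material: "a < r n \<Longrightarrow> t < h n \<Longrightarrow> L (Suc n) (off n a + t) = L n t + real a * w (Suc n)"
  by (simp only: slot_Suc_material) (simp add: width_eq_Suc[of n] algebra_simps)

lemma level_Suc_material_subset: "a < r n \<Longrightarrow> t < h n \<Longrightarrow> lv (Suc n) (off n a + t) \<subseteq> lv n t"
proof -
  assume a: "a < r n" "t < h n"
  have "(real a + 1) * w (Suc n) \<le> w n"
    using a(1) width_pos[of "Suc n"] by (simp add: width_eq_Suc[of n] mult_right_mono)
  then show ?thesis using a width_pos[of "Suc n"] by (auto simp: level_eq L_Suc_material distrib_right)
qed

lemma level_covered_Suc: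
  assumes t: "t < h n" and x: "x \<in> lv n t"
  obtains a where "a < r n" "x \<in> lv (Suc n) (off n a + t)"
proof -
  define q where "q = (x - L n t) / w (Suc n)"
  define a where "a = nat \<lfloor>q\<rfloor>"
  have wp: "0 < w (Suc n)" by (rule width_pos)
  have q: "0 \<le> q" "q < real (r n)"
    using x wp by (auto simp: level_eq width_eq_Suc[of n] q_def field_simps)
  have a: "real a \<le> q" "q < real a + 1" using q(1) by (simp_all add: a_def)
  have "a < r n" using a q by linarith
  moreover have "x \<in> lv (Suc n) (off n a + t)"
    using a wp L_Suc_material[OF \<open>a < r n\<close> t]
    by (auto simp: level_eq q_def field_simps)
  ultimately show thesis using that by blast
qed

section \<open>Columns and the action of T\<close>

definition column :: "nat \<Rightarrow> real set" where
  "column n = (\<Union>j<h n. lv n j)"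

definition pos :: "nat \<Rightarrow> real \<Rightarrow> nat" where
  "pos n x = (THE j. j < h n \<and> x \<in> lv n j)"

lemma pos_eq: "j < h n \<Longrightarrow> x \<in> lv n j \<Longrightarrow> pos n x = j"
  unfolding pos_def using level_disjoint by (intro the_equality) blast+

lemma pos_less_height: "x \<in> column n \<Longrightarrow> pos n x < h n"
  unfolding column_def using pos_eq by auto

lemma in_level_pos: "x \<in> column n \<Longrightarrow> x \<in> lv n (pos n x)"
  unfolding column_def using pos_eq by auto

lemma column_Suc:
  assumes x: "x \<in> column n"
  obtains a where "a < r n" "pos (Suc n) x = off n a + pos n x" "x \<in> column (Suc n)"
proof -
  obtain a where a: "a < r n" "x \<in> lv (Suc n) (off n a + pos n x)"
    using level_covered_Suc[OF pos_less_height[OF x] in_level_pos[OF x]] .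
  have j: "off n a + pos n x < h (Suc n)"
    using off_add_height_le_height[OF a(1)] pos_less_height[OF x] by simp
  show thesis using that a pos_eq[OF j a(2)] j by (auto simp: column_def)
qed

lemma column_mono: "n \<le> m \<Longrightarrow> column n \<subseteq> column m"
  by (induction m rule: dec_induct) (use column_Suc in blast)+

lemma X_eq_Union_column: "X = (\<Union>n. column n)"
  by (simp add: cs_space_def column_def)

lemma level_pos_antimono: "n \<le> m \<Longrightarrow> x \<in> column n \<Longrightarrow> lv m (pos m x) \<subseteq> lv n (pos n x)"
proof (induction m rule: dec_induct)
  case (step m)
  have x: "x \<in> column m" using column_mono step by blast
  obtain a where a: "a < r m" "pos (Suc m) x = off m a + pos m x" using column_Suc[OF x] .
  show ?case
    using level_Suc_material_subset[OF a(1) pos_less_height[OF x]] a(2) step by auto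
qed simp

lemma pos_Suc_add_last_spacers_less:
  assumes "x \<in> column m" shows "pos (Suc m) x + s m (r m - 1) < h (Suc m)"
proof -
  obtain a where "a < r m" "pos (Suc m) x = off m a + pos m x" using column_Suc[OF assms] .
  with off_add_height_add_last_spacers pos_less_height[OF assms] show ?thesis by fastforce
qed

lemma pos_Suc_add_less:
  assumes "x \<in> column m" "pos m x + k < h m"
  shows "pos (Suc m) x + k < h (Suc m)"
proof -
  obtain a where "a < r m" "pos (Suc m) x = off m a + pos m x" using column_Suc[OF assms(1)] .
  with off_add_height_le_height assms(2) show ?thesis by fastforce
qed

lemma L_diff_stable:
  assumes "n \<le> m" "x \<in> column n" "pos n x + i < h n"
  shows "pos m x + i < h m \<and> L m (pos m x + i) - L m (pos m x) = L n (pos n x + i) - L n (pos n x)"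
  using assms(1)
proof (induction m rule: dec_induct)
  case (step m)
  have x: "x \<in> column m" using column_mono step assms by blast
  obtain a where a: "a < r m" "pos (Suc m) x = off m a + pos m x" using column_Suc[OF x] .
  have "off m a + (pos m x + i) < h (Suc m)"
    using off_add_height_le_height[OF a(1)] step(3) by simp
  with step(3) a pos_less_height[OF x] show ?case by (simp add: L_Suc_material add.assoc)
qed (use assms in simp)

text \<open>The choice in cs_T is harmless: all columns in which x lies below the top level translate x by
  the same amount.\<close>
lemma T_eq:
  assumes x: "x \<in> column n" and j: "Suc (pos n x) < h n"
  shows "T x = x - L n (pos n x) + L n (Suc (pos n x))"
proof -
  let ?P = "\<lambda>y. \<exists>n j. Suc j < h n \<and> x \<in> lv n j \<and> y = x - cs_lev r s n j + cs_lev r s n (Suc j)"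
  have unique: "y = x - L n (pos n x) + L n (Suc (pos n x))" if "?P y" for y
  proof -
    from that obtain n' j' where nj: "Suc j' < h n'" "x \<in> lv n' j'"
      "y = x - cs_lev r s n' j' + cs_lev r s n' (Suc j')" by blast
    have x': "x \<in> column n'" using nj by (auto simp: column_def)
    have j': "pos n' x = j'" using pos_eq nj by simp
    define m where "m = max n n'"
    show ?thesis
      using L_diff_stable[of n m x 1] L_diff_stable[of n' m x 1] x j x' nj j'
      by (simp add: m_def cs_lev_eq)
  qed
  have "?P (x - L n (pos n x) + L n (Suc (pos n x)))"
    using x j in_level_pos[OF x] by (auto simp: cs_lev_eq)
  then have "T x = (SOME y. ?P y)" unfolding cs_T_def by auto
  then show ?thesis using someI2[of ?P, OF \<open>?P _\<close> unique] by simp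
qed

lemma funpow_T_eq:
  assumes x: "x \<in> column n" and k: "pos n x + k < h n"
  shows "(T ^^ k) x = x - L n (pos n x) + L n (pos n x + k) \<and> (T ^^ k) x \<in> lv n (pos n x + k)"
  using k
proof (induction k)
  case 0 then show ?case using in_level_pos[OF x] by simp
next
  case (Suc k)
  let ?y = "(T ^^ k) x"
  have IH: "?y = x - L n (pos n x) + L n (pos n x + k)" "?y \<in> lv n (pos n x + k)" using Suc by auto
  have y: "?y \<in> column n" using IH(2) Suc.prems by (auto simp: column_def)
  have py: "pos n ?y = pos n x + k" using pos_eq IH(2) Suc.prems by simp
  have e: "(T ^^ Suc k) x = x - L n (pos n x) + L n (pos n x + Suc k)"
    using T_eq[OF y] py Suc.prems IH(1) by simp
  have "x - L n (pos n x) \<in> {0..<w n}" using in_level_pos[OF x] by (auto simp: level_eq)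
  then have "(T ^^ Suc k) x \<in> lv n (pos n x + Suc k)" unfolding e level_eq by auto
  with e show ?case by blast
qed

section \<open>Measure\<close>

lemma level_sets [simp]: "lv n j \<in> sets lebesgue"
  by (simp add: level_eq)

lemma emeasure_level: "emeasure lebesgue (lv n j) = ennreal (w n)"
  using width_pos[of n] by (simp add: level_eq emeasure_completion)

lemma measure_level: "measure lebesgue (lv n j) = w n"
  using width_pos[of n] by (simp add: level_eq measure_completion)

lemma column_sets [simp]: "column n \<in> sets lebesgue"
  by (auto simp: column_def)

lemma emeasure_column_finite: "emeasure lebesgue (column n) < \<infinity>"
proof -
  have "emeasure lebesgue (column n) \<le> (\<Sum>j<h n. emeasure lebesgue (lv n j))"
    unfolding column_def by (intro emeasure_subadditive_finite) auto
  also have "\<dots> < \<infinity>" by (simp add: emeasure_level ennreal_mult_less_top of_nat_less_top)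
  finally show ?thesis .
qed

lemma measure_column_le: "measure lebesgue (column n) \<le> real (h n) * w n"
proof -
  have "measure lebesgue (column n) \<le> (\<Sum>j<h n. measure lebesgue (lv n j))"
    unfolding column_def by (intro measure_UNION_le) auto
  also have "\<dots> = real (h n) * w n" by (simp add: measure_level)
  finally show ?thesis .
qed

end

text \<open>Off the non-top levels cs_T is the identity, so T^k is a piecewise translation on X only if
  every point eventually lies at least k levels below the top of the columns.\<close>
locale rank_one_deep = rank_one +
  assumes eventually_deep: "\<And>x k. x \<in> X \<Longrightarrow> \<exists>m. x \<in> column m \<and> pos m x + k < h m"
begin

lemma funpow_T_image_level:
  assumes "j + k < h m" "E \<subseteq> lv m j"
  shows "(T ^^ k) ` E = (+) (L m (j + k) - L m j) ` E"
proof (rule image_cong)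
  fix x assume "x \<in> E"
  then have x: "x \<in> column m" "pos m x = j" using assms by (auto simp: column_def pos_eq)
  show "(T ^^ k) x = L m (j + k) - L m j + x" using funpow_T_eq[OF x(1)] x(2) assms(1) by simp
qed simp

lemma funpow_T_image_eq_Union:
  assumes "E \<subseteq> X"
  shows "(T ^^ k) ` E = (\<Union>m. \<Union>j\<in>{j. j + k < h m}. (T ^^ k) ` (E \<inter> lv m j))"
proof
  show "(T ^^ k) ` E \<subseteq> (\<Union>m. \<Union>j\<in>{j. j + k < h m}. (T ^^ k) ` (E \<inter> lv m j))"
  proof
    fix y assume "y \<in> (T ^^ k) ` E"
    then obtain x where x: "x \<in> E" "y = (T ^^ k) x" by blast
    obtain m where "x \<in> column m" "pos m x + k < h m" using eventually_deep[of x k] x assms by blast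
    with x in_level_pos show "y \<in> (\<Union>m. \<Union>j\<in>{j. j + k < h m}. (T ^^ k) ` (E \<inter> lv m j))" by blast
  qed
qed blast

lemma finite_levels_below: "finite {j. j + k < h m}"
  by (rule finite_subset[of _ "{..<h m}"]) auto

lemma funpow_T_image_levels_sets:
  assumes "E \<in> sets lebesgue"
  shows "(\<Union>j\<in>{j. j + k < h m}. (T ^^ k) ` (E \<inter> lv m j)) \<in> sets lebesgue"
  using finite_levels_below assms funpow_T_image_level[of _ k m "E \<inter> lv m _"]
  by (intro sets.finite_UN) (auto intro!: lebesgue_sets_translation)

lemma emeasure_funpow_T_image_levels_le:
  assumes E: "E \<in> sets lebesgue"
  shows "emeasure lebesgue (\<Union>j\<in>{j. j + k < h m}. (T ^^ k) ` (E \<inter> lv m j)) \<le> emeasure lebesgue E"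
proof -
  let ?J = "{j. j + k < h m}"
  have translate: "(T ^^ k) ` (E \<inter> lv m j) = (+) (L m (j + k) - L m j) ` (E \<inter> lv m j)" if "j \<in> ?J" for j
    using that by (intro funpow_T_image_level) auto
  have disj: "disjoint_family_on (\<lambda>j. E \<inter> lv m j) ?J"
    unfolding disjoint_family_on_def
  proof (intro ballI impI)
    fix i j assume "i \<in> ?J" "j \<in> ?J" "i \<noteq> j"
    then have "lv m i \<inter> lv m j = {}" by (intro level_disjoint) auto
    then show "(E \<inter> lv m i) \<inter> (E \<inter> lv m j) = {}" by blast
  qed
  have "emeasure lebesgue (\<Union>j\<in>?J. (T ^^ k) ` (E \<inter> lv m j))
      \<le> (\<Sum>j\<in>?J. emeasure lebesgue ((T ^^ k) ` (E \<inter> lv m j)))"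
    using finite_levels_below E
    by (intro emeasure_subadditive_finite) (auto simp: translate intro!: lebesgue_sets_translation)
  also have "\<dots> = (\<Sum>j\<in>?J. emeasure lebesgue (E \<inter> lv m j))"
    by (intro sum.cong) (simp_all add: translate emeasure_lebesgue_translation)
  also have "\<dots> = emeasure lebesgue (\<Union>j\<in>?J. E \<inter> lv m j)"
    using finite_levels_below E disj by (intro sum_emeasure) auto
  also have "\<dots> \<le> emeasure lebesgue E"
    using E by (intro emeasure_mono) auto
  finally show ?thesis .
qed

lemma funpow_T_image_levels_incseq: "incseq (\<lambda>m. \<Union>j\<in>{j. j + k < h m}. (T ^^ k) ` (E \<inter> lv m j))"
proof (rule incseq_SucI)
  fix m
  show "(\<Union>j\<in>{j. j + k < h m}. (T ^^ k) ` (E \<inter> lv m j))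
    \<subseteq> (\<Union>j\<in>{j. j + k < h (Suc m)}. (T ^^ k) ` (E \<inter> lv (Suc m) j))"
  proof
    fix y assume "y \<in> (\<Union>j\<in>{j. j + k < h m}. (T ^^ k) ` (E \<inter> lv m j))"
    then obtain j x where x: "j + k < h m" "x \<in> E" "x \<in> lv m j" "y = (T ^^ k) x" by auto
    then have "x \<in> column m" "pos m x = j" by (auto simp: column_def pos_eq)
    with x column_mono[of m "Suc m"] pos_Suc_add_less[of x m k] in_level_pos[of x "Suc m"]
    show "y \<in> (\<Union>j\<in>{j. j + k < h (Suc m)}. (T ^^ k) ` (E \<inter> lv (Suc m) j))" by auto
  qed
qed

lemma funpow_T_image_lmeasurable:
  assumes E: "E \<in> lmeasurable" "E \<subseteq> X"
  shows "(T ^^ k) ` E \<in> lmeasurable" "measure lebesgue ((T ^^ k) ` E) \<le> measure lebesgue E"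
proof -
  have Es: "E \<in> sets lebesgue" using E by (simp add: fmeasurable_def)
  have "emeasure lebesgue ((T ^^ k) ` E)
      = (SUP m. emeasure lebesgue (\<Union>j\<in>{j. j + k < h m}. (T ^^ k) ` (E \<inter> lv m j)))"
    unfolding funpow_T_image_eq_Union[OF E(2)] using funpow_T_image_levels_sets[OF Es]
    by (intro SUP_emeasure_incseq[symmetric] funpow_T_image_levels_incseq) auto
  also have "\<dots> \<le> emeasure lebesgue E"
    using emeasure_funpow_T_image_levels_le[OF Es] by (intro SUP_least)
  finally have le: "emeasure lebesgue ((T ^^ k) ` E) \<le> emeasure lebesgue E" .
  have "(T ^^ k) ` E \<in> sets lebesgue"
    unfolding funpow_T_image_eq_Union[OF E(2)] using funpow_T_image_levels_sets[OF Es] by auto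
  then show "(T ^^ k) ` E \<in> lmeasurable"
    using le E(1) by (auto simp: fmeasurable_def)
  then show "measure lebesgue ((T ^^ k) ` E) \<le> measure lebesgue E"
    using le E(1) by (auto simp: measure_def fmeasurable_def intro!: enn2real_mono)
qed

lemma column_lmeasurable [simp]: "column n \<in> lmeasurable"
  using emeasure_column_finite by (simp add: fmeasurable_def)

lemma column_subset_X: "column n \<subseteq> X"
  using X_eq_Union_column by blast

lemma column_return_lmeasurable: "column n \<inter> (T ^^ k) ` column n \<in> lmeasurable"
  using funpow_T_image_lmeasurable(1)[OF column_lmeasurable column_subset_X]
  by (intro fmeasurable_Int_fmeasurable) auto

lemma measure_self_intersection_le:
  assumes A: "A \<in> lmeasurable" "A \<subseteq> X"
  shows "measure lebesgue (A \<inter> (T ^^ k) ` A)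
    \<le> measure lebesgue (column n \<inter> (T ^^ k) ` column n) + 2 * measure lebesgue (A - column n)"
proof -
  let ?C = "column n \<inter> (T ^^ k) ` column n" and ?D = "A - column n"
  have D: "?D \<in> lmeasurable" "?D \<subseteq> X" using A by (auto intro: fmeasurable_Diff)
  have C: "?C \<in> lmeasurable" by (rule column_return_lmeasurable)
  have TD: "(T ^^ k) ` ?D \<in> lmeasurable" using funpow_T_image_lmeasurable(1)[OF D] .
  have TA: "(T ^^ k) ` A \<in> lmeasurable" using funpow_T_image_lmeasurable(1)[OF A] .
  have "A \<inter> (T ^^ k) ` A \<subseteq> ?C \<union> ?D \<union> (T ^^ k) ` ?D" by blast
  then have "measure lebesgue (A \<inter> (T ^^ k) ` A) \<le> measure lebesgue (?C \<union> ?D \<union> (T ^^ k) ` ?D)"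
    using A TA C D TD by (intro measure_mono_fmeasurable) auto
  also have "\<dots> \<le> measure lebesgue ?C + measure lebesgue ?D + measure lebesgue ((T ^^ k) ` ?D)"
    using C D TD measure_Un_le[of "?C \<union> ?D" lebesgue "(T ^^ k) ` ?D"] measure_Un_le[of ?C lebesgue ?D]
    by (auto simp: fmeasurable_def)
  also have "measure lebesgue ((T ^^ k) ` ?D) \<le> measure lebesgue ?D"
    using funpow_T_image_lmeasurable(2)[OF D] .
  finally show ?thesis by simp
qed

lemma measure_diff_column_tendsto_0:
  assumes A: "A \<in> lmeasurable" "A \<subseteq> X"
  shows "(\<lambda>n. measure lebesgue (A - column n)) \<longlonglongrightarrow> 0"
proof -
  have dec: "decseq (\<lambda>n. A - column n)" using column_mono by (auto simp: decseq_def)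
  have sets: "range (\<lambda>n. A - column n) \<subseteq> sets lebesgue" using A(1) by auto
  have fin: "emeasure lebesgue (A - column n) \<noteq> \<infinity>" for n
    using fmeasurable_Diff[OF A(1), of "column n"] by (auto simp: fmeasurable_def)
  have empty: "(\<Inter>n. A - column n) = {}" using A(2) X_eq_Union_column by blast
  show ?thesis using Lim_measure_decseq[OF sets dec fin] unfolding empty by simp
qed

lemma zero_type_if_column_returns_vanish:
  assumes columns: "\<And>n. (\<lambda>k. measure lebesgue (column n \<inter> (T ^^ k) ` column n)) \<longlonglongrightarrow> 0"
  shows "zero_type X T"
  unfolding zero_type_def
proof (intro allI impI)
  fix A assume "A \<in> sets lebesgue \<and> A \<subseteq> X \<and> emeasure lebesgue A < \<infinity>"
  then have A: "A \<in> lmeasurable" "A \<subseteq> X" by (auto simp: fmeasurable_def)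
  show "(\<lambda>k. measure lebesgue (A \<inter> (T ^^ k) ` A)) \<longlonglongrightarrow> 0"
  proof (rule LIMSEQ_I)
    fix eps :: real assume eps: "0 < eps"
    obtain n where n: "measure lebesgue (A - column n) < eps / 3"
      using LIMSEQ_D[OF measure_diff_column_tendsto_0[OF A], of "eps / 3"] eps by auto
    obtain K where K: "\<And>k. K \<le> k \<Longrightarrow> measure lebesgue (column n \<inter> (T ^^ k) ` column n) < eps / 3"
      using LIMSEQ_D[OF columns[of n], of "eps / 3"] eps by auto
    have "measure lebesgue (A \<inter> (T ^^ k) ` A) < eps" if "K \<le> k" for k
      using measure_self_intersection_le[OF A, of k n] n K[OF that] by linarith
    then show "\<exists>K. \<forall>k\<ge>K. norm (measure lebesgue (A \<inter> (T ^^ k) ` A) - 0) < eps" by auto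
  qed
qed

section \<open>Returns of a column to itself\<close>

lemma pos_add_less_mono:
  assumes "x \<in> column m" "pos m x + k < h m" "m \<le> m'"
  shows "x \<in> column m' \<and> pos m' x + k < h m'"
  using assms(3)
proof (induction m' rule: dec_induct)
  case (step m')
  then show ?case using column_mono[of m' "Suc m'"] pos_Suc_add_less[of x m' k] by auto
qed (use assms in simp)

lemma pos_diff_attains_return_time:
  assumes x: "x \<in> column n" and y: "(T ^^ k) x \<in> column n" and k: "h (Suc n) \<le> k"
  obtains N where "n < N" "int (pos N ((T ^^ k) x)) - int (pos N x) \<noteq> int k"
    "int (pos (Suc N) ((T ^^ k) x)) - int (pos (Suc N) x) = int k"
proof -
  let ?y = "(T ^^ k) x"
  define D where "D i = int (pos i ?y) - int (pos i x)" for i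
  obtain m0 where "x \<in> column m0" "pos m0 x + k < h m0"
    using eventually_deep[of x k] x X_eq_Union_column by blast
  then obtain m where m: "x \<in> column m" "pos m x + k < h m" "Suc n \<le> m"
    using pos_add_less_mono[of x m0 k "max m0 (Suc n)"] by auto
  have "pos m ?y = pos m x + k"
    using funpow_T_eq[OF m(1,2)] by (intro pos_eq) (use m(2) in auto)
  then have Dm: "D m = int k" by (simp add: D_def)
  have Dn: "D n \<noteq> int k"
    using pos_less_height[OF x] pos_less_height[OF y] height_mono_Suc[of n] k by (simp add: D_def)
  obtain i where i: "i < m - n" "\<forall>i'\<le>i. D (n + i') \<noteq> int k" "D (n + Suc i) = int k"
    using ex_least_nat_less[of "\<lambda>i. D (n + i) = int k" "m - n"] Dm Dn m(3) by auto
  have "n + i \<noteq> n"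
  proof
    assume "n + i = n"
    moreover have "pos (Suc n) ?y < h (Suc n)" "pos (Suc n) x < h (Suc n)"
      using column_mono[of n "Suc n"] pos_less_height x y by auto
    ultimately show False using i(3) k by (simp add: D_def)
  qed
  then show thesis using that[of "n + i"] i by (simp add: D_def)
qed

definition subcolumn_trace :: "nat \<Rightarrow> nat \<Rightarrow> nat \<Rightarrow> real set" where
  "subcolumn_trace n N a = (\<Union>J\<in>{J. J < h N \<and> lv N J \<subseteq> column n}. lv (Suc N) (off N a + J))"

lemma in_subcolumn_trace:
  assumes "n \<le> N" "x \<in> column n" "x \<in> column (Suc N)" "pos (Suc N) x = off N a + pos N x"
  shows "x \<in> subcolumn_trace n N a"
proof -
  have "lv n (pos n x) \<subseteq> column n" using pos_less_height[OF assms(2)] by (auto simp: column_def)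
  then have "lv N (pos N x) \<subseteq> column n" using level_pos_antimono[OF assms(1,2)] by auto
  moreover have "x \<in> lv (Suc N) (off N a + pos N x)" using in_level_pos[OF assms(3)] assms(4) by simp
  moreover have "pos N x < h N" using pos_less_height column_mono[OF assms(1)] assms(2) by blast
  ultimately show ?thesis unfolding subcolumn_trace_def by blast
qed

text \<open>A return of time k passes from the a-th to the b-th copy of C_N in C_(N+1); e is the difference
  of the positions in C_N of two points of C_(N-1), which lie below the last spacers of C_(N-1).\<close>
definition return_pairs :: "nat \<Rightarrow> nat \<Rightarrow> (nat \<times> nat) set" where
  "return_pairs n k = {(N, a). n < N \<and> k < h (Suc N) \<and>
     (\<exists>b<r N. a < b \<and> (\<exists>e::int. \<bar>e\<bar> + s (N - 1) (r (N - 1) - 1) < h N \<and>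
        int k = int (off N b) - int (off N a) + e))}"

lemma return_decomposition:
  assumes x: "x \<in> column n" and y: "(T ^^ k) x \<in> column n" and k: "h (Suc n) \<le> k"
  shows "\<exists>(N, a)\<in>return_pairs n k. x \<in> subcolumn_trace n N a"
proof -
  let ?y = "(T ^^ k) x"
  obtain N where N: "n < N" "int (pos N ?y) - int (pos N x) \<noteq> int k"
    "int (pos (Suc N) ?y) - int (pos (Suc N) x) = int k"
    using pos_diff_attains_return_time[OF assms] .
  define e where "e = int (pos N ?y) - int (pos N x)"
  have xN: "x \<in> column N" and yN: "?y \<in> column N" using column_mono[of n N] N(1) x y by auto
  obtain a where a: "a < r N" "pos (Suc N) x = off N a + pos N x" "x \<in> column (Suc N)"
    using column_Suc[OF xN] .
  obtain b where b: "b < r N" "pos (Suc N) ?y = off N b + pos N ?y" using column_Suc[OF yN] .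
  have ke: "int k = int (off N b) - int (off N a) + e" using N(3) a(2) b(2) by (simp add: e_def)
  have "column n \<subseteq> column (N - 1)" using N(1) by (intro column_mono) simp
  then have "x \<in> column (N - 1)" "?y \<in> column (N - 1)" using x y by auto
  then have e: "\<bar>e\<bar> + s (N - 1) (r (N - 1) - 1) < h N"
    using pos_Suc_add_last_spacers_less[of x "N - 1"] pos_Suc_add_last_spacers_less[of ?y "N - 1"] N(1)
    by (simp add: e_def split: abs_split)
  have "a < b"
  proof (rule ccontr)
    assume "\<not> a < b"
    then consider "a = b" | "b < a" by linarith
    then show False
    proof cases
      case 1 then show False using ke N(2) by (simp add: e_def)
    next
      case 2 then show False using off_add_height_le[of b a N] ke e by linarith
    qed
  qed
  have "?y \<in> column (Suc N)" using column_mono[of N "Suc N"] yN by auto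
  then have "k < h (Suc N)" using N(3) pos_less_height[of ?y "Suc N"] by linarith
  with N(1) b(1) \<open>a < b\<close> e ke have "(N, a) \<in> return_pairs n k"
    unfolding return_pairs_def by blast
  moreover have "x \<in> subcolumn_trace n N a"
    using in_subcolumn_trace[of n N x a] N(1) x a(2,3) by simp
  ultimately show ?thesis by blast
qed

lemma subcolumn_trace_subset: "a < r N \<Longrightarrow> subcolumn_trace n N a \<subseteq> column n"
  unfolding subcolumn_trace_def using level_Suc_material_subset by blast

lemma subcolumn_trace_sets [simp]: "subcolumn_trace n N a \<in> sets lebesgue"
  unfolding subcolumn_trace_def by (intro sets.finite_UN) auto

lemma measure_subcolumn_trace_le: "measure lebesgue (subcolumn_trace n N a) \<le> real (h n) * w n / real (r N)"
proof -
  let ?J = "{J. J < h N \<and> lv N J \<subseteq> column n}"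
  have fin: "finite ?J" by auto
  have "real (card ?J) * w N = (\<Sum>J\<in>?J. measure lebesgue (lv N J))" by (simp add: measure_level)
  also have "\<dots> = measure lebesgue (\<Union>J\<in>?J. lv N J)"
    using fin by (intro measure_UNION'[symmetric])
      (auto simp: fmeasurable_def emeasure_level pairwise_def disjnt_def level_disjoint)
  also have "\<dots> \<le> measure lebesgue (column n)"
    by (intro measure_mono_fmeasurable) auto
  also have "\<dots> \<le> real (h n) * w n" by (rule measure_column_le)
  finally have card: "real (card ?J) * w N \<le> real (h n) * w n" .
  have "measure lebesgue (subcolumn_trace n N a) \<le> (\<Sum>J\<in>?J. measure lebesgue (lv (Suc N) (off N a + J)))"
    unfolding subcolumn_trace_def using fin by (intro measure_UNION_le) auto
  also have "\<dots> = real (card ?J) * w N / real (r N)" by (simp add: measure_level width_Suc)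
  also have "\<dots> \<le> real (h n) * w n / real (r N)" using card by (simp add: divide_right_mono)
  finally show ?thesis .
qed

lemma measure_column_return_le:
  assumes k: "h (Suc n) \<le> k" and fin: "finite (return_pairs n k)"
  shows "measure lebesgue (column n \<inter> (T ^^ k) ` column n)
    \<le> (\<Sum>(N, a)\<in>return_pairs n k. real (h n) * w n / real (r N))"
proof -
  define E where "E = (\<Union>p\<in>return_pairs n k. subcolumn_trace n (fst p) (snd p))"
  have "subcolumn_trace n N a \<subseteq> column n" if "(N, a) \<in> return_pairs n k" for N a
    using that subcolumn_trace_subset[of a N n] unfolding return_pairs_def by auto
  then have "E \<subseteq> column n" unfolding E_def by force
  moreover have "E \<in> sets lebesgue" unfolding E_def using fin by auto
  ultimately have E: "E \<in> lmeasurable" "E \<subseteq> X"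
    using fmeasurableI2[OF column_lmeasurable] column_subset_X by blast+
  have "column n \<inter> (T ^^ k) ` column n \<subseteq> (T ^^ k) ` E"
  proof
    fix y assume "y \<in> column n \<inter> (T ^^ k) ` column n"
    then obtain x where x: "x \<in> column n" "(T ^^ k) x \<in> column n" "y = (T ^^ k) x" by blast
    then obtain N a where "(N, a) \<in> return_pairs n k" "x \<in> subcolumn_trace n N a"
      using return_decomposition[OF x(1,2) k] by blast
    then have "x \<in> E" unfolding E_def by force
    then show "y \<in> (T ^^ k) ` E" using x(3) by blast
  qed
  then have "measure lebesgue (column n \<inter> (T ^^ k) ` column n) \<le> measure lebesgue ((T ^^ k) ` E)"
    using funpow_T_image_lmeasurable(1)[OF E] column_return_lmeasurable[of n k]
    by (intro measure_mono_fmeasurable) auto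
  also have "\<dots> \<le> measure lebesgue E" using funpow_T_image_lmeasurable(2)[OF E] .
  also have "\<dots> \<le> (\<Sum>p\<in>return_pairs n k. measure lebesgue (subcolumn_trace n (fst p) (snd p)))"
    unfolding E_def using fin by (intro measure_UNION_le) auto
  also have "\<dots> \<le> (\<Sum>(N, a)\<in>return_pairs n k. real (h n) * w n / real (r N))"
    using measure_subcolumn_trace_le by (intro sum_mono) (auto simp: split_beta)
  finally show ?thesis .
qed

end

section \<open>The example\<close>

lemma power_diff_power_inj:
  fixes b :: nat
  assumes b: "2 \<le> b" and u: "u < u'" and v: "v < v'" and eq: "b ^ u' - b ^ u = b ^ v' - b ^ v"
  shows "u = v"
proof -
  have not_less: "\<not> x < y" if "x < x'" "y < y'" "b ^ x' - b ^ x = b ^ y' - b ^ y" for x x' y y'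
  proof
    assume xy: "x < y"
    have "b ^ x * (b ^ (x' - x) - 1) = b ^ x * (b ^ (y - x) * (b ^ (y' - y) - 1))"
      using that xy by (simp add: diff_mult_distrib2 mult.assoc flip: power_add)
    then have "b ^ (x' - x) - 1 = b ^ (y - x) * (b ^ (y' - y) - 1)" using b by simp
    then have "b dvd b ^ (x' - x) - 1" using xy by (simp add: dvd_power dvd_mult2)
    moreover have "b dvd b ^ (x' - x)" using that(1) by (simp add: dvd_power)
    moreover have "1 \<le> b ^ (x' - x)" using b by simp
    ultimately have "b dvd 1" by (metis dvd_diff_nat diff_diff_cancel)
    with b show False by simp
  qed
  show ?thesis using not_less[OF u v eq] not_less[OF v u eq[symmetric]] by simp
qed

definition triangular :: "nat \<Rightarrow> nat" where
  "triangular N = N * (N + 1) div 2"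

definition ceil_sqrt :: "nat \<Rightarrow> nat" where
  "ceil_sqrt N = nat \<lceil>sqrt (real N)\<rceil>"

lemma triangular_Suc: "triangular (Suc N) = triangular N + Suc N"
  unfolding triangular_def by simp

lemma triangular_mono: "N \<le> M \<Longrightarrow> triangular N \<le> triangular M"
  unfolding triangular_def by (intro div_le_mono mult_le_mono) auto

lemma self_le_triangular: "N \<le> triangular N"
  unfolding triangular_def by (cases N) auto

lemma self_less_pow5: "N < 5 ^ N"
  using less_exp[of N] power_mono[of "2::nat" 5 N] by linarith

lemma ceil_sqrt_le: "ceil_sqrt N \<le> N"
proof -
  have "sqrt (real N) \<le> real N"
    using real_sqrt_le_iff[of N "real N ^ 2"] by (cases "N = 0") (auto simp: power2_eq_square)
  then show ?thesis unfolding ceil_sqrt_def by linarith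
qed

lemma ceil_sqrt_pos: "0 < N \<Longrightarrow> 0 < ceil_sqrt N"
  unfolding ceil_sqrt_def by simp

lemma ceil_sqrt_le_sqrt: "real (ceil_sqrt N) \<le> sqrt (real N) + 1"
proof -
  have "0 \<le> \<lceil>sqrt (real N)\<rceil>" using real_sqrt_ge_zero[of "real N"] by linarith
  then have "real (ceil_sqrt N) = of_int \<lceil>sqrt (real N)\<rceil>" by (simp add: ceil_sqrt_def)
  then show ?thesis by linarith
qed

lemma ceil_sqrt_over_tendsto_0: "(\<lambda>N. (real (ceil_sqrt N) + 2) / (real N + 2)) \<longlonglongrightarrow> 0"
proof (rule tendsto_sandwich[of "\<lambda>_. 0" _ _ "\<lambda>N. (sqrt (real N) + 3) / (real N + 2)"])
  show "(\<lambda>N::nat. (sqrt (real N) + 3) / (real N + 2)) \<longlonglongrightarrow> 0" by real_asymp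
  show "\<forall>\<^sub>F N in sequentially. (real (ceil_sqrt N) + 2) / (real N + 2) \<le> (sqrt (real N) + 3) / (real N + 2)"
    using ceil_sqrt_le_sqrt by (intro always_eventually allI divide_right_mono) (auto simp: add.commute)
qed auto

locale zero_type_example =
  fixes r :: "nat \<Rightarrow> nat" and s :: "nat \<Rightarrow> nat \<Rightarrow> nat"
  assumes r_def: "\<And>n. r n = n + 2"
    and h_def: "\<And>n. cs_height r s n = 5 ^ (n * (n + 1) div 2)"
    and H_def: "\<And>n. cs_H r s n =
        {0} \<union> {j * 5 ^ (n * (n + 1) div 2) | j. 1 \<le> j \<and> j \<le> nat \<lceil>sqrt (real n)\<rceil>}
            \<union> {5 ^ (n * (n + 1) div 2 + i) | i. nat \<lceil>sqrt (real n)\<rceil> \<le> i \<and> i \<le> n}"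
begin

sublocale rank_one
  by unfold_locales (simp add: r_def)

lemma height_eq: "h N = 5 ^ triangular N"
  using h_def by (simp add: triangular_def)

lemma height_Suc_eq: "h (Suc N) = 5 * 5 ^ (triangular N + N)"
  by (simp add: height_eq triangular_Suc)

lemma height_mono: "N \<le> M \<Longrightarrow> h N \<le> h M"
  unfolding height_eq by (intro power_increasing triangular_mono) auto

lemma self_less_height: "N < h N"
proof -
  have "N < 5 ^ N" by (rule self_less_pow5)
  also have "(5::nat) ^ N \<le> 5 ^ triangular N" by (intro power_increasing self_le_triangular) auto
  finally show ?thesis by (simp add: height_eq)
qed

lemma off_cases:
  assumes "a < r N"
  shows "(\<exists>j\<le>ceil_sqrt N. off N a = j * 5 ^ triangular N) \<or>
    (\<exists>i. ceil_sqrt N \<le> i \<and> i \<le> N \<and> off N a = 5 ^ (triangular N + i))"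
proof -
  have "off N a \<in> cs_H r s N"
  proof (cases a)
    case (Suc i)
    then have "off N a = (\<Sum>k\<le>i. hk N k)" by (simp add: cs_off_def lessThan_Suc_atMost)
    moreover have "i < r N - 1" using assms Suc by simp
    ultimately show ?thesis unfolding cs_H_def by blast
  qed (simp add: cs_H_def)
  then show ?thesis unfolding H_def by (auto simp: triangular_def ceil_sqrt_def)
qed

lemma off_le: "a < r N \<Longrightarrow> off N a \<le> 5 ^ (triangular N + N)"
proof -
  assume "a < r N"
  have "j * 5 ^ triangular N \<le> 5 ^ (triangular N + N)" if "j \<le> ceil_sqrt N" for j
    using that ceil_sqrt_le[of N] self_less_pow5[of N] by (simp add: power_add)
  moreover have "(5::nat) ^ (triangular N + i) \<le> 5 ^ (triangular N + N)" if "i \<le> N" for i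
    using that by (intro power_increasing) auto
  ultimately show ?thesis using off_cases[OF \<open>a < r N\<close>] by auto
qed

lemma last_spacers_ge: "3 * 5 ^ (triangular N + N) \<le> s N (r N - 1)"
proof -
  have "h N \<le> 5 ^ (triangular N + N)" unfolding height_eq by (intro power_increasing) auto
  with off_last_add_height_add_spacers[of N] off_le[of "r N - 1" N] height_Suc_eq[of N]
  show ?thesis by (simp add: r_def)
qed

sublocale rank_one_deep
proof unfold_locales
  fix x k assume "x \<in> X"
  then obtain n where x: "x \<in> column n" by (auto simp: X_eq_Union_column)
  define m where "m = max n k"
  have xm: "x \<in> column m" using column_mono[of n m] x by (auto simp: m_def)
  have le: "(5::nat) ^ j \<le> 5 ^ (triangular m + m)" if "j \<le> triangular m + m" for j
    using that by (intro power_increasing) auto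
  have "pos m x < 5 ^ triangular m" using pos_less_height[OF xm] by (simp add: height_eq)
  then have "pos m x < 5 ^ (triangular m + m)" using le[of "triangular m"] by linarith
  moreover have "k < 5 ^ m" using self_less_pow5[of m] by (simp add: m_def)
  then have "k < 5 ^ (triangular m + m)" using le[of m] by linarith
  moreover obtain a where "a < r m" "pos (Suc m) x = off m a + pos m x" "x \<in> column (Suc m)"
    using column_Suc[OF xm] .
  ultimately show "\<exists>m. x \<in> column m \<and> pos m x + k < h m"
    using off_le[of a m] height_Suc_eq[of m] by (intro exI[of _ "Suc m"]) auto
qed

lemma return_pair_height_le:
  assumes "(N, a) \<in> return_pairs n k" shows "h N \<le> 2 * k"
proof -
  obtain b e where b: "n < N" "b < r N" "a < b" "\<bar>e\<bar> + s (N - 1) (r (N - 1) - 1) < h N"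
    "int k = int (off N b) - int (off N a) + e"
    using assms unfolding return_pairs_def by blast
  obtain N' where N': "N = Suc N'" using b(1) by (cases N) auto
  define Q where "Q = (5::nat) ^ (triangular N' + N')"
  have hN: "int (h N) = 5 * int Q" by (simp add: N' height_Suc_eq Q_def)
  have "3 * Q \<le> s (N - 1) (r (N - 1) - 1)" using last_spacers_ge[of N'] by (simp add: N' Q_def)
  then have "3 * int Q \<le> int (s (N - 1) (r (N - 1) - 1))" by linarith
  then have e: "\<bar>e\<bar> < 2 * int Q" using b(4) hN by linarith
  have "int (off N a) + int (h N) \<le> int (off N b)" using off_add_height_le[OF b(3), of N] by linarith
  then have "int (h N) \<le> 2 * int k" using b(5) e hN by linarith
  then show ?thesis by linarith
qed

lemma finite_return_stages: "finite {N. n < N \<and> h N \<le> 2 * k \<and> k < h (Suc N)}"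
proof (rule finite_subset)
  show "{N. n < N \<and> h N \<le> 2 * k \<and> k < h (Suc N)} \<subseteq> {..2 * k}"
    using self_less_height by (auto intro: less_imp_le_nat less_le_trans)
qed simp

lemma card_return_stages: "card {N. n < N \<and> h N \<le> 2 * k \<and> k < h (Suc N)} \<le> 2"
proof (cases "{N. n < N \<and> h N \<le> 2 * k \<and> k < h (Suc N)} = {}")
  case False
  let ?V = "{N. n < N \<and> h N \<le> 2 * k \<and> k < h (Suc N)}"
  define N1 where "N1 = Min ?V"
  have N1: "N1 \<in> ?V" unfolding N1_def using Min_in[OF finite_return_stages False] .
  have "?V \<subseteq> {N1, Suc N1}"
  proof
    fix N assume N: "N \<in> ?V"
    have "N1 \<le> N" unfolding N1_def using Min_le[OF finite_return_stages N] .
    moreover have "\<not> Suc (Suc N1) \<le> N"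
    proof
      assume "Suc (Suc N1) \<le> N"
      then have "h (Suc (Suc N1)) \<le> h N" by (rule height_mono)
      moreover have "5 * h (Suc N1) \<le> h (Suc (Suc N1))"
        unfolding height_eq triangular_Suc by (simp add: power_add)
      ultimately show False using N N1 by simp
    qed
    ultimately show "N \<in> {N1, Suc N1}" by auto
  qed
  then have "card ?V \<le> card {N1, Suc N1}" by (intro card_mono) auto
  then show ?thesis by (simp add: card_insert_if)
qed (simp only: card.empty)

definition shift_sources :: "nat \<Rightarrow> nat \<Rightarrow> nat set" where
  "shift_sources N k = {a. \<exists>b<r N. a < b \<and>
     (\<exists>e::int. \<bar>e\<bar> < int (h N) \<and> int k = int (off N b) - int (off N a) + e)}"

lemma shift_sources_subset: "shift_sources N k \<subseteq> {..<r N}"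
  unfolding shift_sources_def by auto

lemma finite_shift_sources: "finite (shift_sources N k)"
  using shift_sources_subset by (rule finite_subset) simp

lemma return_pair_shift_source: "(N, a) \<in> return_pairs n k \<Longrightarrow> a \<in> shift_sources N k"
  unfolding return_pairs_def shift_sources_def by fastforce

lemma return_pairs_subset:
  "return_pairs n k \<subseteq> Sigma {N. n < N \<and> h N \<le> 2 * k \<and> k < h (Suc N)} (\<lambda>N. shift_sources N k)"
proof
  fix p assume p: "p \<in> return_pairs n k"
  obtain N a where [simp]: "p = (N, a)" by (cases p)
  have "n < N" "k < h (Suc N)" using p by (auto simp: return_pairs_def)
  with p return_pair_height_le[of N a n k] return_pair_shift_source[of N a n k]
  show "p \<in> Sigma {N. n < N \<and> h N \<le> 2 * k \<and> k < h (Suc N)} (\<lambda>N. shift_sources N k)" by simp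
qed

text \<open>With T_N = triangular N: among the offsets j 5^T_N at most ceil_sqrt N + 1 can be sources;
  among the offsets 5^(T_N + i) at most one can, because the differences 5^(T_N + i') - 5^(T_N + i)
  are pairwise distinct multiples of 5^(T_N + 1), and k determines them up to an error below
  h_N = 5^T_N.\<close>
lemma geometric_source_partner:
  assumes a: "a \<in> shift_sources N k" and i: "ceil_sqrt N \<le> i" "off N a = 5 ^ (triangular N + i)"
  obtains b i' e where "i < i'" "off N b = 5 ^ (triangular N + i')" "\<bar>e\<bar> < int (h N)"
    "int k = int (off N b) - int (off N a) + e"
proof -
  obtain b e where b: "b < r N" "a < b" "\<bar>e\<bar> < int (h N)" "int k = int (off N b) - int (off N a) + e"
    using a unfolding shift_sources_def by blast
  have lt: "off N a < off N b" using off_strict_mono[OF b(2)] .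
  have "j * 5 ^ triangular N < 5 ^ (triangular N + i)" if "j \<le> ceil_sqrt N" for j
  proof -
    have "j * 5 ^ triangular N < 5 ^ ceil_sqrt N * 5 ^ triangular N"
      using that self_less_pow5[of "ceil_sqrt N"] by simp
    also have "\<dots> \<le> 5 ^ (triangular N + i)"
      using i(1) by (simp add: power_increasing flip: power_add)
    finally show ?thesis .
  qed
  then obtain i' where i': "off N b = 5 ^ (triangular N + i')"
    using off_cases[OF b(1)] lt i(2) by fastforce
  then have "i < i'" using lt i(2) by (simp add: power_strict_increasing_iff)
  then show thesis using that i' b by blast
qed

lemma geometric_source_unique:
  assumes N: "0 < N"
    and a1: "a1 \<in> shift_sources N k" "ceil_sqrt N \<le> i1" "off N a1 = 5 ^ (triangular N + i1)"
    and a2: "a2 \<in> shift_sources N k" "ceil_sqrt N \<le> i2" "off N a2 = 5 ^ (triangular N + i2)"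
  shows "a1 = a2"
proof -
  define g where "g j j' = (5::nat) ^ (triangular N + j') - 5 ^ (triangular N + j)" for j j'
  obtain b1 i1' e1 where b1: "i1 < i1'" "off N b1 = 5 ^ (triangular N + i1')" "\<bar>e1\<bar> < int (h N)"
    "int k = int (off N b1) - int (off N a1) + e1"
    using geometric_source_partner[OF a1] .
  obtain b2 i2' e2 where b2: "i2 < i2'" "off N b2 = 5 ^ (triangular N + i2')" "\<bar>e2\<bar> < int (h N)"
    "int k = int (off N b2) - int (off N a2) + e2"
    using geometric_source_partner[OF a2] .
  have g_int: "int (g j j') = int (5 ^ (triangular N + j')) - int (5 ^ (triangular N + j))" if "j < j'" for j j'
    using that by (simp add: g_def of_nat_diff power_increasing)
  have g_dvd: "5 ^ Suc (triangular N) dvd g j j'" if "1 \<le> j" "j < j'" for j j'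
    using that unfolding g_def by (intro dvd_diff_nat le_imp_power_dvd) auto
  have one: "1 \<le> i1" "1 \<le> i2" using ceil_sqrt_pos[OF N] a1(2) a2(2) by linarith+
  have "int (g i1 i1') - int (g i2 i2') = e2 - e1"
    using b1(4) b2(4) unfolding g_int[OF b1(1)] g_int[OF b2(1)] b1(2) b2(2) a1(3) a2(3) by linarith
  then have "\<bar>int (g i1 i1') - int (g i2 i2')\<bar> < int (5 ^ Suc (triangular N))"
    using b1(3) b2(3) by (simp add: height_eq)
  moreover have "int (5 ^ Suc (triangular N)) dvd int (g i1 i1') - int (g i2 i2')"
    using g_dvd[OF one(1) b1(1)] g_dvd[OF one(2) b2(1)] by (intro dvd_diff) (simp_all only: int_dvd_int_iff)
  ultimately have "int (g i1 i1') - int (g i2 i2') = 0"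
    using dvd_imp_le_int[of "int (g i1 i1') - int (g i2 i2')" "int (5 ^ Suc (triangular N))"] by linarith
  then have g_eq: "g i1 i1' = g i2 i2'" by simp
  have "triangular N + i1 = triangular N + i2"
    by (rule power_diff_power_inj[of 5 _ "triangular N + i1'" _ "triangular N + i2'"])
      (use b1(1) b2(1) g_eq in \<open>simp_all add: g_def\<close>)
  then have "off N a1 = off N a2" using a1(3) a2(3) by simp
  then show ?thesis by (simp add: off_eq_iff)
qed

lemma card_shift_sources_le:
  assumes N: "0 < N" shows "card (shift_sources N k) \<le> ceil_sqrt N + 2"
proof -
  let ?S = "shift_sources N k"
  define A1 where "A1 = {a \<in> ?S. \<exists>j\<le>ceil_sqrt N. off N a = j * 5 ^ triangular N}"
  define A2 where "A2 = {a \<in> ?S. \<exists>i. ceil_sqrt N \<le> i \<and> i \<le> N \<and> off N a = 5 ^ (triangular N + i)}"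
  have fin: "finite A1" "finite A2"
    using finite_shift_sources[of N k] unfolding A1_def A2_def by simp_all
  have "?S \<subseteq> A1 \<union> A2"
    using off_cases shift_sources_subset[of N k] unfolding A1_def A2_def by blast
  then have "card ?S \<le> card A1 + card A2"
    using fin card_mono[of "A1 \<union> A2" ?S] card_Un_le[of A1 A2] by auto
  moreover have "card A1 \<le> card ((\<lambda>j. j * 5 ^ triangular N) ` {..ceil_sqrt N})"
    by (rule card_inj_on_le[of "off N"]) (auto simp: inj_on_def off_eq_iff A1_def)
  then have "card A1 \<le> ceil_sqrt N + 1"
    using card_image_le[of "{..ceil_sqrt N}" "\<lambda>j. j * 5 ^ triangular N"] by simp
  moreover have "\<forall>a1\<in>A2. \<forall>a2\<in>A2. a1 = a2"
    using geometric_source_unique[OF N] unfolding A2_def by blast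
  then have "card A2 \<le> 1" using card_le_Suc0_iff_eq[OF fin(2)] by simp
  ultimately show ?thesis by linarith
qed

lemma return_stage_ge: "h (Suc N0) \<le> k \<Longrightarrow> k < h (Suc N) \<Longrightarrow> N0 \<le> N"
  using height_mono[of "Suc N" "Suc N0"] by (cases "N0 \<le> N") auto

lemma shift_sources_ratio_le:
  assumes "0 < N"
  shows "real (card (shift_sources N k)) / real (r N) \<le> (real (ceil_sqrt N) + 2) / (real N + 2)"
proof -
  have "real (card (shift_sources N k)) \<le> real (ceil_sqrt N) + 2"
    using card_shift_sources_le[OF assms, of k] by simp
  moreover have "real (r N) = real N + 2" by (simp add: r_def)
  ultimately show ?thesis by (simp add: divide_right_mono)
qed

lemma measure_column_return_le_ceil_sqrt:
  assumes k: "h (Suc n) \<le> k" "h (Suc N0) \<le> k"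
    and d: "\<And>N. N0 \<le> N \<Longrightarrow> (real (ceil_sqrt N) + 2) / (real N + 2) \<le> d"
  shows "measure lebesgue (column n \<inter> (T ^^ k) ` column n) \<le> 2 * d * (real (h n) * w n)"
proof -
  let ?V = "{N. n < N \<and> h N \<le> 2 * k \<and> k < h (Suc N)}"
  let ?M = "real (h n) * w n"
  have M: "0 \<le> ?M" using width_pos[of n] by simp
  have "0 \<le> (real (ceil_sqrt N0) + 2) / (real N0 + 2)" by simp
  then have "0 \<le> d" using d[of N0] by linarith
  then have dM: "0 \<le> d * ?M" using M by simp
  have fin: "finite (Sigma ?V (\<lambda>N. shift_sources N k))"
    using finite_return_stages finite_shift_sources by (rule finite_SigmaI)
  have bound: "real (card (shift_sources N k)) * (?M / real (r N)) \<le> d * ?M" if N: "N \<in> ?V" for N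
  proof -
    have "real (card (shift_sources N k)) / real (r N) \<le> d"
      using shift_sources_ratio_le[of N k] d[OF return_stage_ge[OF k(2)]] N by force
    then have "real (card (shift_sources N k)) / real (r N) * ?M \<le> d * ?M"
      using M by (rule mult_right_mono)
    then show ?thesis by simp
  qed
  have "measure lebesgue (column n \<inter> (T ^^ k) ` column n)
      \<le> (\<Sum>(N, a)\<in>return_pairs n k. ?M / real (r N))"
    using measure_column_return_le[OF k(1) finite_subset[OF return_pairs_subset fin]] .
  also have "\<dots> \<le> (\<Sum>(N, a)\<in>Sigma ?V (\<lambda>N. shift_sources N k). ?M / real (r N))"
    by (rule sum_mono2[OF fin return_pairs_subset]) (auto simp: split_beta M)
  also have "\<dots> = (\<Sum>N\<in>?V. real (card (shift_sources N k)) * (?M / real (r N)))"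
    by (subst sum.Sigma[symmetric]) (simp_all add: finite_return_stages finite_shift_sources)
  also have "\<dots> \<le> (\<Sum>N\<in>?V. d * ?M)" using bound by (rule sum_mono)
  also have "\<dots> \<le> 2 * (d * ?M)"
    using card_return_stages[of n k] mult_right_mono[OF _ dM, of "real (card ?V)" 2] by simp
  finally show ?thesis by simp
qed

lemma column_returns_vanish: "(\<lambda>k. measure lebesgue (column n \<inter> (T ^^ k) ` column n)) \<longlonglongrightarrow> 0"
proof (rule LIMSEQ_I)
  fix eps :: real assume eps: "0 < eps"
  define M where "M = real (h n) * w n"
  have M: "0 < M" unfolding M_def using height_pos[of n] width_pos[of n] by simp
  have "0 < eps / (3 * M)" using eps M by simp
  then obtain N0 where "\<forall>N\<ge>N0. norm ((real (ceil_sqrt N) + 2) / (real N + 2) - 0) < eps / (3 * M)"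
    using LIMSEQ_D[OF ceil_sqrt_over_tendsto_0] by blast
  then have N0: "(real (ceil_sqrt N) + 2) / (real N + 2) \<le> eps / (3 * M)" if "N0 \<le> N" for N
    using that by (simp add: abs_less_iff less_imp_le)
  have "measure lebesgue (column n \<inter> (T ^^ k) ` column n) < eps" if k: "h (Suc (max n N0)) \<le> k" for k
  proof -
    have k1: "h (Suc n) \<le> k" using k height_mono[of "Suc n" "Suc (max n N0)"] by simp
    have k2: "h (Suc N0) \<le> k" using k height_mono[of "Suc N0" "Suc (max n N0)"] by simp
    have "measure lebesgue (column n \<inter> (T ^^ k) ` column n) \<le> 2 * (eps / (3 * M)) * M"
      using measure_column_return_le_ceil_sqrt[OF k1 k2 N0] by (simp add: M_def)
    also have "\<dots> < eps" using M eps by (simp add: field_simps)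
    finally show ?thesis .
  qed
  then show "\<exists>K. \<forall>k\<ge>K. norm (measure lebesgue (column n \<inter> (T ^^ k) ` column n) - 0) < eps"
    by auto
qed

end

theorem mainTheorem14:
  fixes r :: "nat \<Rightarrow> nat" and s :: "nat \<Rightarrow> nat \<Rightarrow> nat"
  assumes r_def: "\<And>n. r n = n + 2"
    and h_def: "\<And>n. cs_height r s n = 5 ^ (n * (n + 1) div 2)"
    and H_def: "\<And>n. cs_H r s n =
        {0} \<union> {j * 5 ^ (n * (n + 1) div 2) | j. 1 \<le> j \<and> j \<le> nat \<lceil>sqrt (real n)\<rceil>}
            \<union> {5 ^ (n * (n + 1) div 2 + i) | i. nat \<lceil>sqrt (real n)\<rceil> \<le> i \<and> i \<le> n}"
  shows "zero_type (cs_space r s) (cs_T r s)"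
proof -
  interpret zero_type_example r s
    by (rule zero_type_example.intro) (fact assms)+
  show ?thesis by (rule zero_type_if_column_returns_vanish[OF column_returns_vanish])
qed

end
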